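(* There exists $\ell_0\in\mathbb{N}$ such that for all integers $\ell\ge \ell_0$ the following holds. Let $\delta>0$ and let $m,k\in\mathbb{N}$ with $m\le 2^k$. Let $G$ be a digraph on $n=\ell m$ vertices with $\delta^0(G)\ge \delta n$. Then there exists a partition of $V(G)$ into sets $V_1,\dots,V_m$ such that, for all $i\in\{1,\dots,m\}$, $|V_i|=\ell$ and \[ \delta^0(G[V_i])\ \ge\ \Big(\delta-2\ell^{-1/3}\sum_{0\le j\le k-1}2^{-j/3}\Big)\ell\ \ge\ \big(\delta-10\ell^{-1/3}\big)\ell . \]
   Context: For a digraph $G$, $d^+(v)$ and $d^-(v)$ denote the out-degree and in-degree of a vertex $v$, and $\delta^0(G)=\min\{d^+(v),d^-(v):v\in V(G)\}$ is the minimum semi-degree. For $W\subseteq V(G)$, $G[W]$ is the subdigraph induced on $W$. *)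

theory Defs
  imports Complex_Main
begin

definition digraph :: "'a set \<Rightarrow> ('a \<times> 'a) set \<Rightarrow> bool" where
  "digraph V E \<longleftrightarrow> finite V \<and> E \<subseteq> V \<times> V \<and> (\<forall>v. (v, v) \<notin> E)"

definition out_deg :: "'a set \<Rightarrow> ('a \<times> 'a) set \<Rightarrow> 'a \<Rightarrow> nat" where
  "out_deg V E v = card {w \<in> V. (v, w) \<in> E}"

definition in_deg :: "'a set \<Rightarrow> ('a \<times> 'a) set \<Rightarrow> 'a \<Rightarrow> nat" where
  "in_deg V E v = card {w \<in> V. (w, v) \<in> E}"

definition min_semideg :: "'a set \<Rightarrow> ('a \<times> 'a) set \<Rightarrow> nat" where
  "min_semideg V E = Min ((\<lambda>v. min (out_deg V E v) (in_deg V E v)) ` V)"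

definition induced_arcs :: "('a \<times> 'a) set \<Rightarrow> 'a set \<Rightarrow> ('a \<times> 'a) set" where
  "induced_arcs E W = E \<inter> (W \<times> W)"

end

theory Submission
  imports Defs "HOL-Probability.Hoeffding" "HOL-Real_Asymp.Real_Asymp"
begin

text \<open>
Split the vertex set recursively into halves. At depth j of the recursion a part has t l vertices
with 2^j < t \<le> 2^(j+1), and it is split into parts of \<lceil>t/2\<rceil> l and \<lfloor>t/2\<rfloor> l vertices by choosing
every vertex independently with the right probability and then correcting the size. By
Hoeffding's inequality and a union bound over the 2 t l out- and in-neighbourhoods, once t l is
large every neighbourhood is split proportionally up to an error 2/3 (t l)^(2/3), which is at most
2 l^(-1/3) 2^(-j/3) times the size of the smaller half. After k levels every part has l vertices,
and the relative semi-degree has dropped by at most 2 l^(-1/3) times the sum of 2^(-j/3) over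
j < k, a geometric sum below 5.
\<close>

section \<open>Balanced random subsets\<close>

lemma prob_random_subset_card_deviation:
  fixes U X :: "'a set" and p \<epsilon> :: real
  assumes "finite U" "X \<subseteq> U" "0 \<le> p" "p \<le> 1" "\<epsilon> > 0"
  shows "measure_pmf.prob (Pi_pmf U False (\<lambda>_. bernoulli_pmf p))
           {f. \<epsilon> \<le> \<bar>real (card {x\<in>X. f x}) - real (card X) * p\<bar>}
         \<le> 2 * exp (-2 * \<epsilon>\<^sup>2 / card U)"
proof (cases "X = {}")
  case True
  then show ?thesis using \<open>\<epsilon> > 0\<close> by simp
next
  case False
  define M where "M = Pi_pmf U False (\<lambda>_. bernoulli_pmf p)"
  have "finite X" using assms(1,2) finite_subset by blast
  then have "card X > 0" using False by auto
  have "card X \<le> card U" using assms(1,2) by (rule card_mono)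
  have "binomial_pmf (card X) p
      = map_pmf (\<lambda>f. card {x\<in>X. f x}) (Pi_pmf X False (\<lambda>_. bernoulli_pmf p))"
    using assms(3,4) by (intro binomial_pmf_altdef' \<open>finite X\<close>) auto
  also have "Pi_pmf X False (\<lambda>_. bernoulli_pmf p) = map_pmf (\<lambda>f x. if x \<in> X then f x else False) M"
    unfolding M_def by (rule Pi_pmf_subset[OF assms(1,2)])
  finally have "binomial_pmf (card X) p = map_pmf (\<lambda>f. card {x\<in>X. f x}) M"
    by (simp add: pmf.map_comp o_def cong: conj_cong)
  then have "measure_pmf.prob M {f. \<epsilon> \<le> \<bar>real (card {x\<in>X. f x}) - real (card X) * p\<bar>}
      = measure_pmf.prob (binomial_pmf (card X) p) {n. \<epsilon> \<le> \<bar>real n - real (card X) * p\<bar>}"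
    by (simp add: vimage_def)
  also have "\<dots> \<le> 2 * exp (-2 * \<epsilon>\<^sup>2 / card X)"
    using assms(3-5) \<open>card X > 0\<close>
    by (intro binomial_distribution.prob_abs_ge) (auto simp: binomial_distribution_def)
  also have "\<dots> \<le> 2 * exp (-2 * \<epsilon>\<^sup>2 / card U)"
    using \<open>card X > 0\<close> \<open>card X \<le> card U\<close> \<open>\<epsilon> > 0\<close> by (simp add: frac_le)
  finally show ?thesis unfolding M_def .
qed

lemma exists_subset_balanced_on_family:
  fixes U :: "'a set" and F :: "'a set set" and p \<epsilon> :: real
  assumes "finite U" "finite F" "\<And>X. X \<in> F \<Longrightarrow> X \<subseteq> U" "0 \<le> p" "p \<le> 1" "\<epsilon> > 0"
    and union_bound: "real (card F) * (2 * exp (-2 * \<epsilon>\<^sup>2 / card U)) < 1"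
  shows "\<exists>S\<subseteq>U. \<forall>X\<in>F. \<bar>real (card (X \<inter> S)) - real (card X) * p\<bar> < \<epsilon>"
proof -
  define M where "M = Pi_pmf U False (\<lambda>_. bernoulli_pmf p)"
  define bad where "bad X = {f. \<epsilon> \<le> \<bar>real (card {x\<in>X. f x}) - real (card X) * p\<bar>}" for X :: "'a set"
  have "measure_pmf.prob M (\<Union>X\<in>F. bad X) \<le> (\<Sum>X\<in>F. measure_pmf.prob M (bad X))"
    by (rule measure_pmf.finite_measure_subadditive_finite) (use assms(2) in auto)
  also have "\<dots> \<le> (\<Sum>X\<in>F. 2 * exp (-2 * \<epsilon>\<^sup>2 / card U))"
    using prob_random_subset_card_deviation[OF assms(1) assms(3) assms(4-6)]
    unfolding M_def bad_def by (intro sum_mono) simp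
  finally have "(\<Union>X\<in>F. bad X) \<noteq> UNIV"
    using union_bound by auto
  then obtain f where f: "\<forall>X\<in>F. f \<notin> bad X" by blast
  show ?thesis
  proof (intro exI[of _ "{x\<in>U. f x}"] conjI ballI)
    fix X assume "X \<in> F"
    then have "X \<inter> {x\<in>U. f x} = {x\<in>X. f x}" using assms(3) by blast
    then show "\<bar>real (card (X \<inter> {x\<in>U. f x})) - real (card X) * p\<bar> < \<epsilon>"
      using f \<open>X \<in> F\<close> by (simp add: bad_def not_le)
  qed auto
qed

lemma exists_nested_subset_with_card:
  assumes "finite U" "A \<subseteq> U" "r \<le> card U"
  shows "\<exists>B\<subseteq>U. card B = r \<and> (B \<subseteq> A \<or> A \<subseteq> B)"
proof (cases "r \<le> card A")
  case True
  then obtain B where "B \<subseteq> A" "card B = r" by (rule obtain_subset_with_card_n)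
  then show ?thesis using \<open>A \<subseteq> U\<close> by blast
next
  case False
  have "finite A" using assms(1,2) finite_subset by blast
  then have "r - card A \<le> card (U - A)" using assms by (simp add: card_Diff_subset)
  then obtain C where C: "C \<subseteq> U - A" "card C = r - card A" by (rule obtain_subset_with_card_n)
  then have "card (A \<union> C) = r"
    using False \<open>finite A\<close> \<open>finite U\<close> by (subst card_Un_disjoint) (auto intro: finite_subset)
  then show ?thesis using C \<open>A \<subseteq> U\<close> by (intro exI[of _ "A \<union> C"]) auto
qed

lemma abs_card_Int_diff_le_nested:
  assumes "finite A" "finite B" "A \<subseteq> B \<or> B \<subseteq> A"
  shows "\<bar>real (card (X \<inter> A)) - real (card (X \<inter> B))\<bar> \<le> \<bar>real (card A) - real (card B)\<bar>"
proof -
  have le: "\<bar>real (card (X \<inter> A)) - real (card (X \<inter> B))\<bar> \<le> \<bar>real (card A) - real (card B)\<bar>"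
    if "A \<subseteq> B" "finite B" for A B
  proof -
    have "finite A" using that finite_subset by blast
    have "card (X \<inter> B) = card (X \<inter> A) + card (X \<inter> (B - A))"
      using that \<open>finite A\<close> by (subst card_Un_disjoint[symmetric]) (auto intro: arg_cong[where f = card])
    moreover have "card B = card A + card (B - A)"
      using that \<open>finite A\<close> by (subst card_Un_disjoint[symmetric]) (auto intro: arg_cong[where f = card])
    moreover have "card (X \<inter> (B - A)) \<le> card (B - A)"
      using that by (intro card_mono) auto
    ultimately show ?thesis by simp
  qed
  show ?thesis
    using assms le[of A B] le[of B A] by (auto simp: abs_minus_commute)
qed

lemma exists_subset_with_card_balanced_on_family:
  fixes U :: "'a set" and F :: "'a set set" and \<epsilon> :: real
  assumes "finite U" "finite F" "\<And>X. X \<in> F \<Longrightarrow> X \<subseteq> U" "r \<le> card U" "\<epsilon> > 0"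
    and union_bound: "(real (card F) + 1) * (2 * exp (-2 * \<epsilon>\<^sup>2 / card U)) < 1"
  shows "\<exists>A\<subseteq>U. card A = r \<and>
    (\<forall>X\<in>F. \<bar>real (card (X \<inter> A)) - real (card X) * (r / card U)\<bar> \<le> 2 * \<epsilon>)"
proof -
  have "r / card U \<le> 1" using \<open>r \<le> card U\<close> by (cases "card U = 0") auto
  moreover have "real (card (insert U F)) \<le> real (card F) + 1"
    by (simp add: card_insert_if \<open>finite F\<close>)
  then have "real (card (insert U F)) * (2 * exp (-2 * \<epsilon>\<^sup>2 / card U))
      \<le> (real (card F) + 1) * (2 * exp (-2 * \<epsilon>\<^sup>2 / card U))"
    by (intro mult_right_mono) auto
  then have "real (card (insert U F)) * (2 * exp (-2 * \<epsilon>\<^sup>2 / card U)) < 1"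
    using union_bound by linarith
  ultimately obtain S where "S \<subseteq> U"
    and S: "\<forall>X\<in>insert U F. \<bar>real (card (X \<inter> S)) - real (card X) * (r / card U)\<bar> < \<epsilon>"
    using exists_subset_balanced_on_family[of U "insert U F" "r / card U" \<epsilon>] assms by auto
  \<comment> \<open>Since U is in the family, S has size r up to \<epsilon>, and resizing S costs at most another \<epsilon>.\<close>
  have "\<bar>real (card S) - real r\<bar> < \<epsilon>"
    using S \<open>S \<subseteq> U\<close> \<open>r \<le> card U\<close> by (cases "card U = 0") (auto simp: Int_absorb1)
  obtain A where "A \<subseteq> U" "card A = r" "A \<subseteq> S \<or> S \<subseteq> A"
    using exists_nested_subset_with_card[OF \<open>finite U\<close> \<open>S \<subseteq> U\<close> \<open>r \<le> card U\<close>] by blast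
  have "finite A" "finite S" using \<open>A \<subseteq> U\<close> \<open>S \<subseteq> U\<close> \<open>finite U\<close> finite_subset by auto
  have "\<bar>real (card (X \<inter> A)) - real (card X) * (r / card U)\<bar> \<le> 2 * \<epsilon>" if "X \<in> F" for X
  proof -
    have "\<bar>real (card (X \<inter> A)) - real (card (X \<inter> S))\<bar> \<le> \<bar>real (card A) - real (card S)\<bar>"
      using \<open>finite A\<close> \<open>finite S\<close> \<open>A \<subseteq> S \<or> S \<subseteq> A\<close> by (rule abs_card_Int_diff_le_nested)
    moreover have "\<bar>real (card (X \<inter> S)) - real (card X) * (r / card U)\<bar> < \<epsilon>"
      using S that by blast
    ultimately show ?thesis
      using \<open>\<bar>real (card S) - real r\<bar> < \<epsilon>\<close> unfolding \<open>card A = r\<close> by arith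
  qed
  then show ?thesis using \<open>A \<subseteq> U\<close> \<open>card A = r\<close> by blast
qed

section \<open>Semi-degree under splitting\<close>

text \<open>A lower bound predicate instead of \<^const>\<open>min_semideg\<close>, which is junk on W = {} and natural-valued.\<close>
definition semideg_ge :: "('a \<times> 'a) set \<Rightarrow> 'a set \<Rightarrow> real \<Rightarrow> bool" where
  "semideg_ge E W c \<longleftrightarrow>
     (\<forall>v\<in>W. c \<le> real (card {w\<in>W. (v, w) \<in> E}) \<and> c \<le> real (card {w\<in>W. (w, v) \<in> E}))"

lemma semideg_ge_mono: "c' \<le> c \<Longrightarrow> semideg_ge E W c \<Longrightarrow> semideg_ge E W c'"
  unfolding semideg_ge_def by force

lemma semideg_ge_of_min_semideg:
  assumes "finite V" "c \<le> real (min_semideg V E)"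
  shows "semideg_ge E V c"
  unfolding semideg_ge_def
proof
  fix v assume "v \<in> V"
  then have "min_semideg V E \<le> min (out_deg V E v) (in_deg V E v)"
    unfolding min_semideg_def using \<open>finite V\<close> by (intro Min_le) auto
  then show "c \<le> real (card {w\<in>V. (v, w) \<in> E}) \<and> c \<le> real (card {w\<in>V. (w, v) \<in> E})"
    using assms(2) by (simp add: out_deg_def in_deg_def)
qed

lemma min_semideg_induced_ge:
  assumes "card W > 0" "semideg_ge E W c"
  shows "c \<le> real (min_semideg W (induced_arcs E W))"
proof -
  let ?deg = "\<lambda>v. min (out_deg W (induced_arcs E W) v) (in_deg W (induced_arcs E W) v)"
  have "finite W" "W \<noteq> {}" using \<open>card W > 0\<close> by (simp_all add: card_gt_0_iff)
  then have "min_semideg W (induced_arcs E W) \<in> ?deg ` W"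
    unfolding min_semideg_def by (intro Min_in) auto
  then obtain v where "v \<in> W" "min_semideg W (induced_arcs E W) = ?deg v" by blast
  moreover have "?deg v = min (card {w\<in>W. (v, w) \<in> E}) (card {w\<in>W. (w, v) \<in> E})"
    using \<open>v \<in> W\<close> by (simp add: out_deg_def in_deg_def induced_arcs_def conj_commute cong: conj_cong)
  ultimately show ?thesis using assms(2) by (auto simp: semideg_ge_def min_def)
qed

definition neighbourhoods :: "('a \<times> 'a) set \<Rightarrow> 'a set \<Rightarrow> 'a set set" where
  "neighbourhoods E U = (\<lambda>v. {w\<in>U. (v, w) \<in> E}) ` U \<union> (\<lambda>v. {w\<in>U. (w, v) \<in> E}) ` U"

lemma card_neighbourhoods_le:
  assumes "finite U"
  shows "card (neighbourhoods E U) \<le> 2 * card U"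
proof -
  have "card (neighbourhoods E U)
      \<le> card ((\<lambda>v. {w\<in>U. (v, w) \<in> E}) ` U) + card ((\<lambda>v. {w\<in>U. (w, v) \<in> E}) ` U)"
    unfolding neighbourhoods_def by (rule card_Un_le)
  also have "\<dots> \<le> card U + card U"
    by (intro add_mono card_image_le assms)
  finally show ?thesis by simp
qed

lemma semideg_ge_split_of_balanced:
  assumes "A \<subseteq> U" "finite U" "semideg_ge E U c" "0 \<le> q" "q \<le> 1"
    and balanced: "\<And>X. X \<in> neighbourhoods E U \<Longrightarrow> \<bar>real (card (X \<inter> A)) - real (card X) * q\<bar> \<le> e"
  shows "semideg_ge E A (c * q - e)" "semideg_ge E (U - A) (c * (1 - q) - e)"
proof -
  have shares: "c * q - e \<le> real (card (X \<inter> A)) \<and> c * (1 - q) - e \<le> real (card (X - A))"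
    if "X \<in> neighbourhoods E U" "c \<le> real (card X)" for X
  proof -
    have "finite X"
      using that(1) \<open>finite U\<close> by (auto simp: neighbourhoods_def intro: finite_subset)
    then have "real (card (X - A)) = real (card X) - real (card (X \<inter> A))"
      by (simp add: card_Diff_subset_Int of_nat_diff card_mono flip: Diff_Int2)
    moreover have "c * q \<le> real (card X) * q" "c * (1 - q) \<le> real (card X) * (1 - q)"
      using that(2) \<open>0 \<le> q\<close> \<open>q \<le> 1\<close> by (simp_all add: mult_right_mono)
    ultimately show ?thesis
      using balanced[OF that(1)] unfolding right_diff_distrib mult_1_right by arith
  qed
  have nbhds: "{w\<in>U. (v, w) \<in> E} \<in> neighbourhoods E U \<and> c \<le> real (card {w\<in>U. (v, w) \<in> E}) \<and>
      {w\<in>U. (w, v) \<in> E} \<in> neighbourhoods E U \<and> c \<le> real (card {w\<in>U. (w, v) \<in> E})"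
    if "v \<in> U" for v
    using that \<open>semideg_ge E U c\<close> by (auto simp: neighbourhoods_def semideg_ge_def)
  show "semideg_ge E A (c * q - e)"
    unfolding semideg_ge_def
  proof
    fix v assume "v \<in> A"
    then have "v \<in> U" using \<open>A \<subseteq> U\<close> by blast
    have "{w\<in>A. P w} = {w\<in>U. P w} \<inter> A" for P using \<open>A \<subseteq> U\<close> by blast
    then show "c * q - e \<le> real (card {w\<in>A. (v, w) \<in> E}) \<and> c * q - e \<le> real (card {w\<in>A. (w, v) \<in> E})"
      using shares[of "{w\<in>U. (v, w) \<in> E}"] shares[of "{w\<in>U. (w, v) \<in> E}"] nbhds[OF \<open>v \<in> U\<close>]
      by simp
  qed
  show "semideg_ge E (U - A) (c * (1 - q) - e)"
    unfolding semideg_ge_def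
  proof
    fix v assume "v \<in> U - A"
    have "{w\<in>U - A. P w} = {w\<in>U. P w} - A" for P by blast
    then show "c * (1 - q) - e \<le> real (card {w\<in>U - A. (v, w) \<in> E}) \<and>
               c * (1 - q) - e \<le> real (card {w\<in>U - A. (w, v) \<in> E})"
      using shares[of "{w\<in>U. (v, w) \<in> E}"] shares[of "{w\<in>U. (w, v) \<in> E}"] nbhds \<open>v \<in> U - A\<close>
      by simp
  qed
qed

lemma semideg_ge_split:
  fixes E :: "('a \<times> 'a) set" and \<gamma> \<epsilon> :: real
  assumes "finite U" "r \<le> card U" "semideg_ge E U (\<gamma> * card U)" "\<epsilon> > 0"
    and union_bound: "(2 * real (card U) + 1) * (2 * exp (-2 * \<epsilon>\<^sup>2 / card U)) < 1"
  shows "\<exists>A\<subseteq>U. card A = r \<and> semideg_ge E A (\<gamma> * r - 2 * \<epsilon>)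
                         \<and> semideg_ge E (U - A) (\<gamma> * (real (card U) - real r) - 2 * \<epsilon>)"
proof -
  have "0 \<le> r / card U" "r / card U \<le> 1" using \<open>r \<le> card U\<close> by (cases "card U = 0"; simp)+
  have "finite (neighbourhoods E U)" "\<And>X. X \<in> neighbourhoods E U \<Longrightarrow> X \<subseteq> U"
    using \<open>finite U\<close> by (auto simp: neighbourhoods_def)
  moreover have "(real (card (neighbourhoods E U)) + 1) * (2 * exp (-2 * \<epsilon>\<^sup>2 / card U))
      \<le> (2 * real (card U) + 1) * (2 * exp (-2 * \<epsilon>\<^sup>2 / card U))"
    using card_neighbourhoods_le[OF \<open>finite U\<close>, of E] by (intro mult_right_mono) auto
  ultimately obtain A where "A \<subseteq> U" "card A = r" and balanced: "\<forall>X\<in>neighbourhoods E U.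
      \<bar>real (card (X \<inter> A)) - real (card X) * (r / card U)\<bar> \<le> 2 * \<epsilon>"
    using exists_subset_with_card_balanced_on_family[OF \<open>finite U\<close> _ _ \<open>r \<le> card U\<close> \<open>\<epsilon> > 0\<close>]
      union_bound by (meson le_less_trans)
  have shares: "\<gamma> * card U * (r / card U) = \<gamma> * r"
    "\<gamma> * card U * (1 - r / card U) = \<gamma> * (real (card U) - real r)"
    using \<open>r \<le> card U\<close> by (cases "card U = 0"; simp add: field_simps)+
  show ?thesis
    using semideg_ge_split_of_balanced[OF \<open>A \<subseteq> U\<close> \<open>finite U\<close> \<open>semideg_ge E U (\<gamma> * card U)\<close>
        \<open>0 \<le> r / card U\<close> \<open>r / card U \<le> 1\<close> balanced[rule_format]] \<open>A \<subseteq> U\<close> \<open>card A = r\<close>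
    unfolding shares by blast
qed

section \<open>Recursive halving\<close>

text \<open>2/3 (t l)^(2/3) is the error 2\<epsilon> of a split of t l vertices, and b l the size of the smaller half.\<close>
lemma halving_error_le:
  fixes t l b :: real and d :: nat
  assumes "0 < l" "2 ^ d \<le> t" "t \<le> 3 * b"
  shows "2/3 * (t * l) powr (2/3) \<le> 2 * l powr (-1/3) * 2 powr (- real d / 3) * (b * l)"
proof -
  have "t > 0" using assms(2) zero_less_power[of "2::real" d] by linarith
  have two_thirds: "x powr (2/3) = x powr (-1/3) * x" if "x > 0" for x :: real
    using that powr_add[of x "-1/3" 1] by simp
  have "t powr (-1/3) \<le> (2 ^ d) powr (-1/3)"
    using assms(2) by (intro powr_mono2') auto
  also have "(2 ^ d) powr (-1/3) = (2::real) powr (- real d / 3)"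
    by (simp add: powr_powr powr_realpow[symmetric])
  finally have "t powr (-1/3) * (t / 3) \<le> 2 powr (- real d / 3) * b"
    using assms(3) \<open>t > 0\<close> by (intro mult_mono) auto
  then have "2 * (l powr (-1/3) * l) * (t powr (-1/3) * (t / 3))
      \<le> 2 * (l powr (-1/3) * l) * (2 powr (- real d / 3) * b)"
    using \<open>l > 0\<close> by (intro mult_left_mono) auto
  moreover have "2/3 * (t * l) powr (2/3) = 2 * (l powr (-1/3) * l) * (t powr (-1/3) * (t / 3))"
    using \<open>t > 0\<close> \<open>l > 0\<close> by (simp add: powr_mult two_thirds)
  ultimately show ?thesis
    by (simp add: mult_ac)
qed

text \<open>The failure bound of \<open>semideg_ge_split\<close> for N = card U and \<epsilon> = N^(2/3)/3.\<close>
definition halving_failure_bound :: "nat \<Rightarrow> real" where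
  "halving_failure_bound N = (2 * real N + 1) * (2 * exp (-2 * (real N powr (2/3) / 3)\<^sup>2 / real N))"

lemma eventually_halving_failure_bound_lt_1: "\<exists>N0. \<forall>N\<ge>N0. halving_failure_bound N < 1"
proof -
  have "halving_failure_bound \<longlonglongrightarrow> 0"
    unfolding halving_failure_bound_def by real_asymp
  then have "eventually (\<lambda>N. halving_failure_bound N < 1) sequentially"
    by (rule order_tendstoD) simp
  then show ?thesis by (simp add: eventually_sequentially)
qed

lemma semideg_ge_halve:
  fixes E :: "('a \<times> 'a) set" and l t d :: nat and \<gamma> :: real
  defines "\<eta> \<equiv> 2 * real l powr (-1/3) * 2 powr (- real d / 3)"
  assumes "halving_failure_bound (t * l) < 1"
    and "1 \<le> l" "2 ^ d < t" "finite U" "card U = t * l" "semideg_ge E U (\<gamma> * (t * l))"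
  shows "\<exists>A B. A \<union> B = U \<and> A \<inter> B = {} \<and>
    card A = (t + 1) div 2 * l \<and> semideg_ge E A ((\<gamma> - \<eta>) * ((t + 1) div 2 * l)) \<and>
    card B = t div 2 * l \<and> semideg_ge E B ((\<gamma> - \<eta>) * (t div 2 * l))"
proof -
  define a where "a = (t + 1) div 2"
  define b where "b = t div 2"
  have "t \<ge> 2" using \<open>2 ^ d < t\<close> one_le_power[of "2::nat" d] by linarith
  then have "a + b = t" "b \<le> a" "t \<le> 3 * b" by (auto simp: a_def b_def)
  define \<epsilon> where "\<epsilon> = real (t * l) powr (2/3) / 3"
  have "\<epsilon> > 0" using \<open>t \<ge> 2\<close> \<open>1 \<le> l\<close> by (simp add: \<epsilon>_def)
  have "a * l \<le> card U" using \<open>card U = t * l\<close> by (simp flip: \<open>a + b = t\<close> add: add_mult_distrib)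
  moreover have "(2 * real (card U) + 1) * (2 * exp (-2 * \<epsilon>\<^sup>2 / card U)) < 1"
    using \<open>halving_failure_bound (t * l) < 1\<close>
    unfolding halving_failure_bound_def \<epsilon>_def \<open>card U = t * l\<close> .
  moreover have "semideg_ge E U (\<gamma> * card U)"
    using \<open>semideg_ge E U (\<gamma> * (t * l))\<close> unfolding \<open>card U = t * l\<close> .
  ultimately obtain A where "A \<subseteq> U" "card A = a * l"
    and A: "semideg_ge E A (\<gamma> * (a * l) - 2 * \<epsilon>)"
    and B: "semideg_ge E (U - A) (\<gamma> * (real (card U) - real (a * l)) - 2 * \<epsilon>)"
    using semideg_ge_split[OF \<open>finite U\<close> _ _ \<open>\<epsilon> > 0\<close>] by blast
  have "real (card U) - real (a * l) = real (b * l)"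
    using \<open>card U = t * l\<close> by (simp flip: \<open>a + b = t\<close> add: add_mult_distrib)
  have "2 * \<epsilon> \<le> \<eta> * (b * l)"
    using halving_error_le[where t = "real t" and l = "real l" and b = "real b" and d = d]
      \<open>1 \<le> l\<close> \<open>2 ^ d < t\<close> \<open>t \<le> 3 * b\<close>
    unfolding \<epsilon>_def \<eta>_def by (simp add: mult.assoc)
  moreover have "\<eta> * (b * l) \<le> \<eta> * (a * l)"
    using \<open>b \<le> a\<close> by (intro mult_left_mono) (auto simp: \<eta>_def intro: mult_right_mono)
  ultimately have "(\<gamma> - \<eta>) * (a * l) \<le> \<gamma> * (a * l) - 2 * \<epsilon>"
    and "(\<gamma> - \<eta>) * (b * l) \<le> \<gamma> * (real (card U) - real (a * l)) - 2 * \<epsilon>"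
    unfolding left_diff_distrib \<open>real (card U) - real (a * l) = real (b * l)\<close> by linarith+
  then have "semideg_ge E A ((\<gamma> - \<eta>) * (a * l))" "semideg_ge E (U - A) ((\<gamma> - \<eta>) * (b * l))"
    using semideg_ge_mono A B by blast+
  moreover have "card (U - A) = b * l"
    using \<open>A \<subseteq> U\<close> \<open>card A = a * l\<close> \<open>card U = t * l\<close> \<open>finite U\<close>
    by (simp add: card_Diff_subset finite_subset add_mult_distrib flip: \<open>a + b = t\<close>)
  ultimately show ?thesis
    unfolding a_def[symmetric] b_def[symmetric] using \<open>A \<subseteq> U\<close> \<open>card A = a * l\<close>
    by (intro exI[of _ A] exI[of _ "U - A"]) blast
qed

definition indexed_partition :: "'a set \<Rightarrow> nat \<Rightarrow> (nat \<Rightarrow> 'a set) \<Rightarrow> bool" where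
  "indexed_partition U t P \<longleftrightarrow>
     (\<Union>i\<in>{1..t}. P i) = U \<and> (\<forall>i\<in>{1..t}. \<forall>j\<in>{1..t}. i \<noteq> j \<longrightarrow> P i \<inter> P j = {})"

lemma ball_append_blocks:
  fixes a b :: nat
  assumes "\<forall>i\<in>{1..a}. Q (PA i)" "\<forall>i\<in>{1..b}. Q (PB i)"
  shows "\<forall>i\<in>{1..a + b}. Q (if i \<le> a then PA i else PB (i - a))"
proof
  fix i assume "i \<in> {1..a + b}"
  show "Q (if i \<le> a then PA i else PB (i - a))"
  proof (cases "i \<le> a")
    case True
    then show ?thesis using assms(1) \<open>i \<in> {1..a + b}\<close> by simp
  next
    case False
    then have "i - a \<in> {1..b}" using \<open>i \<in> {1..a + b}\<close> by auto
    then show ?thesis using assms(2) False by simp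
  qed
qed

lemma indexed_partition_append:
  assumes "indexed_partition A a PA" "indexed_partition B b PB" "A \<inter> B = {}"
  shows "indexed_partition (A \<union> B) (a + b) (\<lambda>i. if i \<le> a then PA i else PB (i - a))"
proof -
  let ?P = "\<lambda>i. if i \<le> a then PA i else PB (i - a)"
  have in_A: "?P i \<subseteq> A" if "i \<in> {1..a + b}" "i \<le> a" for i
    using that assms(1) by (auto simp: indexed_partition_def)
  have in_B: "?P i \<subseteq> B" if "i \<in> {1..a + b}" "\<not> i \<le> a" for i
  proof -
    have "i - a \<in> {1..b}" using that by auto
    then show ?thesis using that(2) assms(2) by (auto simp: indexed_partition_def)
  qed
  have "(\<Union>i\<in>{1..a + b}. ?P i) \<subseteq> A \<union> B"
  proof (rule UN_least)
    fix i assume "i \<in> {1..a + b}"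
    then show "?P i \<subseteq> A \<union> B" using in_A[of i] in_B[of i] by blast
  qed
  moreover have "A \<subseteq> (\<Union>i\<in>{1..a + b}. ?P i)" "B \<subseteq> (\<Union>i\<in>{1..a + b}. ?P i)"
  proof
    fix x assume "x \<in> A"
    then obtain i where "i \<in> {1..a}" "x \<in> PA i"
      using assms(1) unfolding indexed_partition_def by blast
    then show "x \<in> (\<Union>i\<in>{1..a + b}. ?P i)" by (intro UN_I[of i]) auto
  next
    show "B \<subseteq> (\<Union>i\<in>{1..a + b}. ?P i)"
    proof
      fix x assume "x \<in> B"
      then obtain i where "i \<in> {1..b}" "x \<in> PB i"
        using assms(2) unfolding indexed_partition_def by blast
      then show "x \<in> (\<Union>i\<in>{1..a + b}. ?P i)" by (intro UN_I[of "i + a"]) auto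
    qed
  qed
  moreover have "?P i \<inter> ?P j = {}" if "i \<in> {1..a + b}" "j \<in> {1..a + b}" "i \<noteq> j" for i j
  proof -
    consider "i \<le> a" "j \<le> a" | "\<not> i \<le> a" "\<not> j \<le> a" | "(i \<le> a) \<noteq> (j \<le> a)" by blast
    then show ?thesis
    proof cases
      case 1
      then show ?thesis using assms(1) that by (simp add: indexed_partition_def)
    next
      case 2
      then have "i - a \<in> {1..b}" "j - a \<in> {1..b}" "i - a \<noteq> j - a" using that by auto
      then show ?thesis using assms(2) 2 by (simp add: indexed_partition_def)
    next
      case 3
      then have "?P i \<subseteq> A \<and> ?P j \<subseteq> B \<or> ?P i \<subseteq> B \<and> ?P j \<subseteq> A"
        using in_A in_B that(1,2) by (cases "i \<le> a") simp_all
      then show ?thesis using assms(3) by blast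
    qed
  qed
  ultimately show ?thesis unfolding indexed_partition_def by blast
qed

lemma exists_indexed_partition_append:
  assumes "indexed_partition A a PA" "indexed_partition B b PB" "A \<inter> B = {}"
    and "\<forall>i\<in>{1..a}. Q (PA i)" "\<forall>i\<in>{1..b}. Q (PB i)"
  shows "\<exists>P. indexed_partition (A \<union> B) (a + b) P \<and> (\<forall>i\<in>{1..a + b}. Q (P i))"
  using indexed_partition_append[OF assms(1-3)] ball_append_blocks[where Q = Q, OF assms(4,5)]
  by (intro exI[of _ "\<lambda>i. if i \<le> a then PA i else PB (i - a)"] conjI)

definition halving_loss :: "nat \<Rightarrow> nat \<Rightarrow> real" where
  "halving_loss l d = 2 * real l powr (-1/3) * (\<Sum>j<d. 2 powr (- real j / 3))"

lemma halving_loss_Suc: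
  "halving_loss l (Suc d) = 2 * real l powr (-1/3) * 2 powr (- real d / 3) + halving_loss l d"
  by (simp add: halving_loss_def algebra_simps)

lemma partition_into_blocks_semideg_ge:
  fixes E :: "('a \<times> 'a) set" and U :: "'a set" and l N0 d t :: nat and \<gamma> :: real
  assumes "\<forall>N\<ge>N0. halving_failure_bound N < 1" and "1 \<le> l" "N0 \<le> l"
  shows "t \<le> 2 ^ d \<Longrightarrow> finite U \<Longrightarrow> card U = t * l \<Longrightarrow> semideg_ge E U (\<gamma> * (t * l)) \<Longrightarrow>
    \<exists>P. indexed_partition U t P \<and>
        (\<forall>i\<in>{1..t}. card (P i) = l \<and> semideg_ge E (P i) ((\<gamma> - halving_loss l d) * l))"
proof (induction d arbitrary: t U \<gamma>)
  case 0
  then have "t = 0 \<or> t = 1" by auto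
  then show ?case
  proof
    assume "t = 0"
    then show ?thesis using "0.prems"
      by (intro exI[of _ "\<lambda>_. {}"]) (simp add: indexed_partition_def halving_loss_def)
  next
    assume "t = 1"
    then show ?thesis using "0.prems"
      by (intro exI[of _ "\<lambda>_. U"]) (simp add: indexed_partition_def halving_loss_def)
  qed
next
  case (Suc d)
  show ?case
  proof (cases "t \<le> 2 ^ d")
    case True
    have "(\<gamma> - halving_loss l (Suc d)) * l \<le> (\<gamma> - halving_loss l d) * l"
      by (intro mult_right_mono) (simp_all add: halving_loss_Suc)
    then show ?thesis
      using Suc.IH[OF True Suc.prems(2-4)] semideg_ge_mono by blast
  next
    case False
    define a where "a = (t + 1) div 2"
    define b where "b = t div 2"
    define \<eta> where "\<eta> = 2 * real l powr (-1/3) * 2 powr (- real d / 3)"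
    have "(t + 1) div 2 \<le> M" "t div 2 \<le> M" if "t \<le> 2 * M" for M
      using that by presburger+
    then have "a \<le> 2 ^ d" "b \<le> 2 ^ d" "a + b = t"
      using \<open>t \<le> 2 ^ Suc d\<close> unfolding a_def b_def by simp_all
    have "2 ^ d < t" using False by simp
    then have "l \<le> t * l" by simp
    then have "N0 \<le> t * l" using \<open>N0 \<le> l\<close> by (rule le_trans[rotated])
    with assms(1) have "halving_failure_bound (t * l) < 1" by blast
    then obtain A B where "A \<union> B = U" "A \<inter> B = {}" "card A = a * l" "card B = b * l"
      and "semideg_ge E A ((\<gamma> - \<eta>) * (a * l))" "semideg_ge E B ((\<gamma> - \<eta>) * (b * l))"
      using semideg_ge_halve[OF _ \<open>1 \<le> l\<close> \<open>2 ^ d < t\<close> Suc.prems(2-4)]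
      unfolding a_def[symmetric] b_def[symmetric] \<eta>_def[symmetric] by blast
    moreover have "finite A" "finite B" using \<open>A \<union> B = U\<close> \<open>finite U\<close> by auto
    ultimately obtain PA PB where "indexed_partition A a PA" "indexed_partition B b PB"
      and PA: "\<forall>i\<in>{1..a}. card (PA i) = l \<and> semideg_ge E (PA i) ((\<gamma> - halving_loss l (Suc d)) * l)"
      and PB: "\<forall>i\<in>{1..b}. card (PB i) = l \<and> semideg_ge E (PB i) ((\<gamma> - halving_loss l (Suc d)) * l)"
      using Suc.IH[OF \<open>a \<le> 2 ^ d\<close> \<open>finite A\<close> \<open>card A = a * l\<close> \<open>semideg_ge E A ((\<gamma> - \<eta>) * (a * l))\<close>]
        Suc.IH[OF \<open>b \<le> 2 ^ d\<close> \<open>finite B\<close> \<open>card B = b * l\<close> \<open>semideg_ge E B ((\<gamma> - \<eta>) * (b * l))\<close>]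
      unfolding diff_diff_eq \<eta>_def halving_loss_Suc[symmetric] by blast
    show ?thesis
      using exists_indexed_partition_append[where
          Q = "\<lambda>X. card X = l \<and> semideg_ge E X ((\<gamma> - halving_loss l (Suc d)) * l)",
          OF \<open>indexed_partition A a PA\<close> \<open>indexed_partition B b PB\<close> \<open>A \<inter> B = {}\<close> PA PB]
      unfolding \<open>A \<union> B = U\<close> \<open>a + b = t\<close> .
  qed
qed

lemma partition_into_blocks_min_semideg:
  fixes E :: "('a \<times> 'a) set" and \<delta> :: real
  assumes "\<forall>N\<ge>N0. halving_failure_bound N < 1" "1 \<le> l" "N0 \<le> l"
    and "m \<le> 2 ^ k" "finite V" "card V = l * m" "\<delta> * real (card V) \<le> real (min_semideg V E)"
  shows "\<exists>P. indexed_partition V m P \<and> (\<forall>i\<in>{1..m}. card (P i) = l \<and>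
           (\<delta> - halving_loss l k) * l \<le> real (min_semideg (P i) (induced_arcs E (P i))))"
proof -
  have "card V = m * l" using \<open>card V = l * m\<close> by simp
  moreover have "semideg_ge E V (\<delta> * (m * l))"
    using assms(5-7) by (intro semideg_ge_of_min_semideg) (simp_all add: mult.commute)
  ultimately obtain P where "indexed_partition V m P"
    and blocks: "\<forall>i\<in>{1..m}. card (P i) = l \<and> semideg_ge E (P i) ((\<delta> - halving_loss l k) * l)"
    by (metis partition_into_blocks_semideg_ge[OF assms(1-5)])
  moreover have "(\<delta> - halving_loss l k) * l \<le> real (min_semideg (P i) (induced_arcs E (P i)))"
    if "i \<in> {1..m}" for i
    using blocks that \<open>1 \<le> l\<close> by (intro min_semideg_induced_ge) auto
  ultimately show ?thesis using blocks by blast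
qed

lemma sum_two_powr_neg_third_le_5: "(\<Sum>j<k. (2::real) powr (- real j / 3)) \<le> 5"
proof -
  define r :: real where "r = 2 powr (-1/3)"
  have "r > 0" by (simp add: r_def)
  have "r ^ j = 2 powr (- real j / 3)" for j
  proof -
    have "r ^ j = r powr real j"
      using \<open>r > 0\<close> by (simp add: powr_realpow)
    also have "\<dots> = 2 powr (- real j / 3)"
      by (simp add: r_def powr_powr)
    finally show ?thesis .
  qed
  from this[of 3] have "r ^ 3 = 1/2"
    by (simp add: powr_minus)
  moreover have "(4/5 :: real) ^ 3 = 64/125"
    by (simp add: power3_eq_cube)
  ultimately have "r ^ 3 < (4/5) ^ 3"
    by linarith
  then have "r < 4/5"
    by (rule power_less_imp_less_base) simp
  have "(\<Sum>j<k. (2::real) powr (- real j / 3)) = (\<Sum>j<k. r ^ j)"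
    using \<open>\<And>j. r ^ j = 2 powr (- real j / 3)\<close> by simp
  also have "\<dots> = (1 - r ^ k) / (1 - r)"
    using \<open>r < 4/5\<close> by (simp add: geometric_sum[of r k] field_simps)
  also have "\<dots> \<le> 1 / (1 - r)"
    using \<open>r > 0\<close> \<open>r < 4/5\<close> by (intro divide_right_mono) auto
  also have "\<dots> \<le> 5"
    using \<open>r < 4/5\<close> by (simp add: field_simps)
  finally show ?thesis .
qed

lemma halving_loss_le: "halving_loss l k \<le> 10 * real l powr (-1/3)"
proof -
  have "real l powr (-1/3) * (\<Sum>j<k. 2 powr (- real j / 3)) \<le> real l powr (-1/3) * 5"
    by (intro mult_left_mono sum_two_powr_neg_third_le_5) simp
  then show ?thesis by (simp add: halving_loss_def)
qed

theorem lemma2p1: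
  shows "\<exists>l0::nat. \<forall>l::nat. l \<ge> l0 \<longrightarrow>
    (\<forall>(\<delta>::real) (m::nat) (k::nat) (V::nat set) (E::(nat \<times> nat) set).
      \<delta> > 0 \<longrightarrow> m \<le> 2 ^ k \<longrightarrow> digraph V E \<longrightarrow> card V = l * m \<longrightarrow>
      real (min_semideg V E) \<ge> \<delta> * real (card V) \<longrightarrow>
      (\<exists>P :: nat \<Rightarrow> nat set.
          (\<Union>i\<in>{1..m}. P i) = V \<and>
          (\<forall>i\<in>{1..m}. \<forall>j\<in>{1..m}. i \<noteq> j \<longrightarrow> P i \<inter> P j = {}) \<and>
          (\<forall>i\<in>{1..m}. card (P i) = l \<and>
             real (min_semideg (P i) (induced_arcs E (P i)))
               \<ge> (\<delta> - 2 * real l powr (-1/3) * (\<Sum>j<k. 2 powr (- real j / 3))) * real l \<and>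
             (\<delta> - 2 * real l powr (-1/3) * (\<Sum>j<k. 2 powr (- real j / 3))) * real l
               \<ge> (\<delta> - 10 * real l powr (-1/3)) * real l)))"
proof -
  obtain N0 where N0: "\<forall>N\<ge>N0. halving_failure_bound N < 1"
    using eventually_halving_failure_bound_lt_1 by blast
  show ?thesis
  proof (intro exI[of _ "max 1 N0"] allI impI, goal_cases)
    case (1 l \<delta> m k V E)
    then have "1 \<le> l" "N0 \<le> l" "finite V" by (simp_all add: digraph_def)
    then obtain P where "indexed_partition V m P"
      and "\<forall>i\<in>{1..m}. card (P i) = l \<and>
             (\<delta> - halving_loss l k) * l \<le> real (min_semideg (P i) (induced_arcs E (P i)))"
      using partition_into_blocks_min_semideg[OF N0 \<open>1 \<le> l\<close> \<open>N0 \<le> l\<close> "1"(3) \<open>finite V\<close> "1"(5,6)]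
      by blast
    moreover have "(\<delta> - 10 * real l powr (-1/3)) * l \<le> (\<delta> - halving_loss l k) * l"
      using halving_loss_le[of l k] by (intro mult_right_mono) auto
    ultimately show ?case
      unfolding indexed_partition_def halving_loss_def by blast
  qed
qed

end
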